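(* Let $P$ be a finite subset of a metric space with metric $\|\cdot-\cdot\|$, let $Q\subseteq P$ be finite, let $\rho\ge 0$ and let $t\ge 1$ be an integer. Let $M$ be the set of critical simplices of the filtered relaxed Delaunay complex $\mathrm{Del}^\rho(Q,P)$ (with filtration defined below). For every $x\in P$ and $\ell\in\{1,\ldots,|Q|\}$ let $D(x,\ell)$ be the $\ell$-th nearest neighbor of $x$ in $Q$ (ties broken arbitrarily); for $i\in\{0,1,\ldots,t\}$ let $\ell_x^i$ be the largest integer $\ell$ such that $\bigl|\|x-D(x,1)\|-\|x-D(x,\ell)\|\bigr|\le\rho i/t$, let $\sigma_x^i=\{D(x,1),D(x,2),\ldots,D(x,\ell_x^i)\}$, and let $W=\{\sigma_x^i : x\in P,\ i\in\{0,1,\ldots,t\}\}$. Then $M\subseteq W$.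
   Context: For $r\ge 0$, the relaxed Delaunay complex $\mathrm{Del}^r(Q,P)$ is the simplicial complex with vertex set $Q$ in which a simplex $\sigma=\{q_0,\ldots,q_s\}\subseteq Q$ belongs to $\mathrm{Del}^r(Q,P)$ iff there exists $x\in P$ such that $\|x-q_j\|\le\|x-q\|+r$ for all $q_j\in\sigma$ and all $q\in Q$. The filtration on $\mathrm{Del}^\rho(Q,P)$ takes values in $\{0,1,\ldots,t\}$: the filtration value $f(\sigma)$ of $\sigma\in\mathrm{Del}^\rho(Q,P)$ is the smallest $i\in\{0,\ldots,t\}$ such that $\sigma\in\mathrm{Del}^{\rho i/t}(Q,P)$. A simplex $\sigma$ is critical if $f(\sigma)<f(\tau)$ for every proper coface $\tau\supsetneq\sigma$ in the complex. *)

theory Defs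
  imports "HOL-Analysis.Analysis"
begin

definition relaxed_delaunay :: "'a::metric_space set \<Rightarrow> 'a set \<Rightarrow> real \<Rightarrow> 'a set set" where
  "relaxed_delaunay Q P r =
     {\<sigma>. \<sigma> \<subseteq> Q \<and> \<sigma> \<noteq> {} \<and>
          (\<exists>x\<in>P. \<forall>qj\<in>\<sigma>. \<forall>q\<in>Q. dist x qj \<le> dist x q + r)}"

definition filt_val :: "'a::metric_space set \<Rightarrow> 'a set \<Rightarrow> real \<Rightarrow> nat \<Rightarrow> 'a set \<Rightarrow> nat" where
  "filt_val Q P \<rho> t \<sigma> = (LEAST i. i \<le> t \<and> \<sigma> \<in> relaxed_delaunay Q P (\<rho> * real i / real t))"

definition critical_simplices :: "'a::metric_space set \<Rightarrow> 'a set \<Rightarrow> real \<Rightarrow> nat \<Rightarrow> 'a set set" where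
  "critical_simplices Q P \<rho> t =
     {\<sigma> \<in> relaxed_delaunay Q P \<rho>.
        \<forall>\<tau> \<in> relaxed_delaunay Q P \<rho>. \<sigma> \<subset> \<tau> \<longrightarrow> filt_val Q P \<rho> t \<sigma> < filt_val Q P \<rho> t \<tau>}"

definition nn_order :: "'a::metric_space set \<Rightarrow> 'a \<Rightarrow> (nat \<Rightarrow> 'a) \<Rightarrow> bool" where
  "nn_order Q x d \<longleftrightarrow> bij_betw d {1..card Q} Q \<and>
     (\<forall>i\<in>{1..card Q}. \<forall>j\<in>{1..card Q}. i \<le> j \<longrightarrow> dist x (d i) \<le> dist x (d j))"

definition ell :: "'a::metric_space set \<Rightarrow> real \<Rightarrow> nat \<Rightarrow> (nat \<Rightarrow> 'a) \<Rightarrow> 'a \<Rightarrow> nat \<Rightarrow> nat" where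
  "ell Q \<rho> t d x i = (GREATEST l. l \<in> {1..card Q} \<and>
       \<bar>dist x (d 1) - dist x (d l)\<bar> \<le> \<rho> * real i / real t)"

definition sigma_x :: "'a::metric_space set \<Rightarrow> real \<Rightarrow> nat \<Rightarrow> (nat \<Rightarrow> 'a) \<Rightarrow> 'a \<Rightarrow> nat \<Rightarrow> 'a set" where
  "sigma_x Q \<rho> t d x i = d ` {1..ell Q \<rho> t d x i}"

end

theory Submission
  imports Defs
begin

text \<open>A critical simplex \<sigma> of filtration value i is witnessed by some x \<in> P at radius
  r = \<rho> i / t, so \<sigma> lies inside the set S of points of Q that are within r of the
  nearest distance from x. S is itself a simplex of Del^r, hence of filtration value at
  most i; criticality forbids \<sigma> \<subset> S, so \<sigma> = S. Finally S is exactly the prefix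
  \<sigma>_x^i of the nearest-neighbour ordering from x.\<close>

definition relaxed_nearest :: "'a::metric_space set \<Rightarrow> 'a \<Rightarrow> real \<Rightarrow> 'a set" where
  "relaxed_nearest Q x r = {q \<in> Q. \<forall>q'\<in>Q. dist x q \<le> dist x q' + r}"

lemma relaxed_delaunay_iff:
  "\<sigma> \<in> relaxed_delaunay Q P r \<longleftrightarrow>
     \<sigma> \<noteq> {} \<and> (\<exists>x\<in>P. \<sigma> \<subseteq> relaxed_nearest Q x r)"
  unfolding relaxed_delaunay_def relaxed_nearest_def by blast

lemma relaxed_nearest_in_relaxed_delaunay:
  "x \<in> P \<Longrightarrow> relaxed_nearest Q x r \<noteq> {} \<Longrightarrow> relaxed_nearest Q x r \<in> relaxed_delaunay Q P r"
  unfolding relaxed_delaunay_iff by blast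

lemma relaxed_nearest_mono: "r \<le> s \<Longrightarrow> relaxed_nearest Q x r \<subseteq> relaxed_nearest Q x s"
  unfolding relaxed_nearest_def by force

lemma relaxed_delaunay_mono:
  assumes "r \<le> s"
  shows "relaxed_delaunay Q P r \<subseteq> relaxed_delaunay Q P s"
proof
  fix \<sigma> assume "\<sigma> \<in> relaxed_delaunay Q P r"
  then show "\<sigma> \<in> relaxed_delaunay Q P s"
    unfolding relaxed_delaunay_iff using relaxed_nearest_mono[OF assms] by blast
qed

lemma filt_val_le:
  "i \<le> t \<Longrightarrow> \<sigma> \<in> relaxed_delaunay Q P (\<rho> * real i / real t) \<Longrightarrow> filt_val Q P \<rho> t \<sigma> \<le> i"
  unfolding filt_val_def by (rule Least_le) simp

lemma filt_val_spec:
  assumes "\<sigma> \<in> relaxed_delaunay Q P \<rho>" and "t \<ge> 1"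
  shows "filt_val Q P \<rho> t \<sigma> \<le> t \<and>
         \<sigma> \<in> relaxed_delaunay Q P (\<rho> * real (filt_val Q P \<rho> t \<sigma>) / real t)"
  unfolding filt_val_def by (rule LeastI[of _ t]) (use assms in simp)

lemma critical_simplex_eq_relaxed_nearest:
  assumes crit: "\<sigma> \<in> critical_simplices Q P \<rho> t" and "\<rho> \<ge> 0" and "t \<ge> 1"
  obtains x i where "x \<in> P" and "i \<le> t" and "\<sigma> \<noteq> {}"
    and "\<sigma> = relaxed_nearest Q x (\<rho> * real i / real t)"
proof -
  have \<sigma>_del: "\<sigma> \<in> relaxed_delaunay Q P \<rho>"
    and \<sigma>_crit: "\<And>\<tau>. \<tau> \<in> relaxed_delaunay Q P \<rho> \<Longrightarrow> \<sigma> \<subset> \<tau> \<Longrightarrow>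
                    filt_val Q P \<rho> t \<sigma> < filt_val Q P \<rho> t \<tau>"
    using crit unfolding critical_simplices_def by auto
  define i where "i = filt_val Q P \<rho> t \<sigma>"
  define r where "r = \<rho> * real i / real t"
  have "i \<le> t" and "\<sigma> \<in> relaxed_delaunay Q P r"
    using filt_val_spec[OF \<sigma>_del \<open>t \<ge> 1\<close>] unfolding i_def r_def by auto
  then obtain x where "x \<in> P" and "\<sigma> \<noteq> {}" and \<sigma>_sub: "\<sigma> \<subseteq> relaxed_nearest Q x r"
    unfolding relaxed_delaunay_iff by blast
  define S where "S = relaxed_nearest Q x r"
  have S_del: "S \<in> relaxed_delaunay Q P r"
    unfolding S_def using relaxed_nearest_in_relaxed_delaunay \<open>x \<in> P\<close> \<open>\<sigma> \<noteq> {}\<close> \<sigma>_sub by blast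
  have "r \<le> \<rho>"
    unfolding r_def using \<open>i \<le> t\<close> \<open>t \<ge> 1\<close> \<open>\<rho> \<ge> 0\<close> by (simp add: divide_le_eq mult_left_mono)
  then have "S \<in> relaxed_delaunay Q P \<rho>"
    using S_del relaxed_delaunay_mono by blast
  moreover have "filt_val Q P \<rho> t S \<le> i"
    using filt_val_le \<open>i \<le> t\<close> S_del unfolding r_def by blast
  ultimately have "\<not> \<sigma> \<subset> S"
    using \<sigma>_crit unfolding i_def by fastforce
  then have "\<sigma> = S"
    using \<sigma>_sub unfolding S_def by blast
  then show thesis
    using that \<open>x \<in> P\<close> \<open>i \<le> t\<close> \<open>\<sigma> \<noteq> {}\<close> unfolding S_def r_def by blast
qed

lemma nn_order_image: "nn_order Q x d \<Longrightarrow> d ` {1..card Q} = Q"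
  unfolding nn_order_def bij_betw_def by blast

lemma nn_order_first_nearest:
  assumes nn: "nn_order Q x d" and "q \<in> Q"
  shows "dist x (d 1) \<le> dist x q"
proof -
  obtain j where j: "j \<in> {1..card Q}" "q = d j"
    using nn_order_image[OF nn] \<open>q \<in> Q\<close> by blast
  moreover have "1 \<in> {1..card Q}"
    using j(1) by simp
  ultimately show ?thesis
    using nn unfolding nn_order_def by simp
qed

lemma relaxed_nearest_nn_order:
  assumes nn: "nn_order Q x d" and "card Q \<ge> 1"
  shows "relaxed_nearest Q x r = {q \<in> Q. dist x q \<le> dist x (d 1) + r}"
proof -
  have "d 1 \<in> Q"
    using nn_order_image[OF nn] \<open>card Q \<ge> 1\<close> by force
  with nn_order_first_nearest[OF nn] show ?thesis
    unfolding relaxed_nearest_def by (auto, smt (verit) nn_order_first_nearest[OF nn])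
qed

text \<open>Since d 1 is nearest, the absolute value in the definition of ell is just
  dist x (d l) - dist x (d 1).\<close>
lemma ell_spec:
  fixes i t :: nat
  assumes nn: "nn_order Q x d" and "card Q \<ge> 1" and "\<rho> \<ge> 0"
  defines "r \<equiv> \<rho> * real i / real t"
  shows "ell Q \<rho> t d x i \<in> {1..card Q}"
    and "dist x (d (ell Q \<rho> t d x i)) \<le> dist x (d 1) + r"
    and "\<And>l. l \<in> {1..card Q} \<Longrightarrow> dist x (d l) \<le> dist x (d 1) + r \<Longrightarrow> l \<le> ell Q \<rho> t d x i"
proof -
  define adm where "adm l \<longleftrightarrow> l \<in> {1..card Q} \<and> \<bar>dist x (d 1) - dist x (d l)\<bar> \<le> r" for l
  have ell_eq: "ell Q \<rho> t d x i = (GREATEST l. adm l)"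
    unfolding ell_def adm_def r_def ..
  have adm_iff: "adm l \<longleftrightarrow> l \<in> {1..card Q} \<and> dist x (d l) \<le> dist x (d 1) + r" for l
    using nn_order_first_nearest[OF nn] nn_order_image[OF nn] unfolding adm_def by force
  have "r \<ge> 0"
    unfolding r_def using \<open>\<rho> \<ge> 0\<close> by simp
  then have "adm 1"
    using adm_iff \<open>card Q \<ge> 1\<close> by simp
  moreover have "\<And>l. adm l \<Longrightarrow> l \<le> card Q"
    unfolding adm_def by simp
  ultimately have "adm (GREATEST l. adm l)" and "\<And>l. adm l \<Longrightarrow> l \<le> (GREATEST l. adm l)"
    using GreatestI_nat[of adm 1 "card Q"] Greatest_le_nat[of adm _ "card Q"] by blast+
  then show "ell Q \<rho> t d x i \<in> {1..card Q}"
    and "dist x (d (ell Q \<rho> t d x i)) \<le> dist x (d 1) + r"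
    and "\<And>l. l \<in> {1..card Q} \<Longrightarrow> dist x (d l) \<le> dist x (d 1) + r \<Longrightarrow> l \<le> ell Q \<rho> t d x i"
    unfolding ell_eq adm_iff by auto
qed

lemma sigma_x_eq_relaxed_nearest:
  assumes nn: "nn_order Q x d" and "card Q \<ge> 1" and "\<rho> \<ge> 0"
  shows "sigma_x Q \<rho> t d x i = relaxed_nearest Q x (\<rho> * real i / real t)"
proof -
  let ?L = "ell Q \<rho> t d x i" and ?r = "\<rho> * real i / real t"
  note L = ell_spec[OF nn \<open>card Q \<ge> 1\<close> \<open>\<rho> \<ge> 0\<close>, where i=i and t=t]
  have mono: "\<And>j k. j \<in> {1..card Q} \<Longrightarrow> k \<in> {1..card Q} \<Longrightarrow> j \<le> k \<Longrightarrow> dist x (d j) \<le> dist x (d k)"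
    using nn unfolding nn_order_def by blast
  have "d ` {1..?L} = {q \<in> Q. dist x q \<le> dist x (d 1) + ?r}"
  proof (intro equalityI subsetI)
    fix q assume "q \<in> d ` {1..?L}"
    then obtain l where l: "l \<in> {1..?L}" "q = d l" by blast
    then have "l \<in> {1..card Q}" using L(1) by auto
    then show "q \<in> {q \<in> Q. dist x q \<le> dist x (d 1) + ?r}"
      using l mono[of l ?L] L(1,2) nn_order_image[OF nn] by force
  next
    fix q assume q: "q \<in> {q \<in> Q. dist x q \<le> dist x (d 1) + ?r}"
    then obtain l where "l \<in> {1..card Q}" "q = d l"
      using nn_order_image[OF nn] by (metis (no_types, lifting) imageE mem_Collect_eq)
    then show "q \<in> d ` {1..?L}"
      using q L(3)[of l] by auto
  qed
  then show ?thesis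
    unfolding sigma_x_def relaxed_nearest_nn_order[OF nn \<open>card Q \<ge> 1\<close>] .
qed

theorem lemma5:
  fixes P Q :: "'a::metric_space set" and \<rho> :: real and t :: nat
    and D :: "'a \<Rightarrow> nat \<Rightarrow> 'a"
  assumes "finite P" and "Q \<subseteq> P" and "finite Q" and "\<rho> \<ge> 0" and "t \<ge> 1"
    and "\<forall>x\<in>P. nn_order Q x (D x)"
  shows "critical_simplices Q P \<rho> t \<subseteq>
           {sigma_x Q \<rho> t (D x) x i | x i. x \<in> P \<and> i \<in> {0..t}}"
proof
  fix \<sigma> assume "\<sigma> \<in> critical_simplices Q P \<rho> t"
  then obtain x i where "x \<in> P" "i \<le> t" "\<sigma> \<noteq> {}"
    and \<sigma>_eq: "\<sigma> = relaxed_nearest Q x (\<rho> * real i / real t)"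
    using critical_simplex_eq_relaxed_nearest assms(4,5) by blast
  have "Q \<noteq> {}"
    using \<open>\<sigma> \<noteq> {}\<close> unfolding \<sigma>_eq relaxed_nearest_def by blast
  then have "card Q \<ge> 1"
    using \<open>finite Q\<close> by (simp add: Suc_le_eq card_gt_0_iff)
  then have "\<sigma> = sigma_x Q \<rho> t (D x) x i"
    using sigma_x_eq_relaxed_nearest assms(4,6) \<open>x \<in> P\<close> \<sigma>_eq by metis
  then show "\<sigma> \<in> {sigma_x Q \<rho> t (D x) x i | x i. x \<in> P \<and> i \<in> {0..t}}"
    using \<open>x \<in> P\<close> \<open>i \<le> t\<close> by auto
qed

end
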